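(* Let $X$ be a Banach space and $f_k:X\to\mathbb{R}\cup\{+\infty\}$ $(k\in\mathbb{N})$ proper convex functions such that $f:=\sup_{k\in\mathbb{N}}f_k$ is proper. Let $f_\infty(x):=\limsup_{k\to\infty}f_k(x)$ $(x\in X)$. Then $$\inf_{x\in X} f(x)=\max\Big\{\inf_{x\in X}\Big(\overline{\sum_{k\in\mathbb{N}}}\lambda_kf_k(x)+\lambda_\infty f_\infty(x)\Big):\ (\lambda_1,\lambda_2,\ldots)\in\ell^1_+,\ \lambda_\infty\ge0,\ \sum_{k=1}^{\infty}\lambda_k+\lambda_\infty=1\Big\},$$ in particular the maximum is attained.
   Context: $\ell^1_+$ is the set of sequences in $\ell^1$ with nonnegative entries. For $x\in X$, $\overline{\sum_{k\in\mathbb{N}}}\lambda_kf_k(x):=\limsup_{n\to\infty}\sum_{k=1}^n\lambda_kf_k(x)$. Conventions: $0\cdot(+\infty)=+\infty$ and $(+\infty)-(+\infty)=+\infty$. *)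

theory Defs
  imports "HOL-Analysis.Analysis"
begin

text \<open>Scalar multiplication of an extended real by a nonnegative real with the
  paper's convention 0 * (+infinity) = +infinity (otherwise the usual ereal product).\<close>
definition emul :: "real \<Rightarrow> ereal \<Rightarrow> ereal" where
  "emul l t = (if l = 0 \<and> t = \<infinity> then \<infinity> else ereal l * t)"

definition proper_fun :: "('a \<Rightarrow> ereal) \<Rightarrow> bool" where
  "proper_fun f \<longleftrightarrow> (\<forall>x. f x \<noteq> -\<infinity>) \<and> (\<exists>x. f x \<noteq> \<infinity>)"

definition convex_efun :: "('a::real_vector \<Rightarrow> ereal) \<Rightarrow> bool" where
  "convex_efun f \<longleftrightarrow> (\<forall>x y. \<forall>t::real. 0 < t \<and> t < 1 \<longrightarrow>
      f ((1 - t) *\<^sub>R x + t *\<^sub>R y) \<le> ereal (1 - t) * f x + ereal t * f y)"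

definition upper_series :: "(nat \<Rightarrow> real) \<Rightarrow> (nat \<Rightarrow> 'a \<Rightarrow> ereal) \<Rightarrow> 'a \<Rightarrow> ereal" where
  "upper_series l f x = limsup (\<lambda>n. \<Sum>k<n. emul (l k) (f k x))"

end

(*
  The bound "<=" is pointwise: for any admissible weights, the limsup of the weighted
  partial sums plus lambda_infinity times limsup f_k never exceeds sup_k f_k.

  For the converse let alpha = inf sup_k f_k (finite without loss of generality) and
  s_N = sup_{k >= N} f_k, so that s_N = max (f_N, s_(N+1)) on the convex set where
  sup_k f_k < +infinity.  A separating hyperplane in the plane shows that if
  alpha <= max (u, v) on a convex set, with u and v convex, then alpha <= (1 - t) u + t v
  for one fixed t in [0, 1].  Starting from alpha <= s_0 and splitting, at step N, the
  mass still carried by s_N between f_N and s_(N+1), we obtain weights lambda_k with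
  alpha <= sum_{k<N} lambda_k f_k + (1 - sum_{k<N} lambda_k) s_N for every N.  As N tends
  to infinity, s_N decreases to f_infinity and the remaining mass tends to
  lambda_infinity = 1 - sum_k lambda_k; outside the convex set both sides are +infinity.
*)
theory Submission
  imports Defs
begin

lemma lower_quadrant_halfplane:
  fixes w1 w2 \<alpha> b :: real
  assumes quadrant: "\<And>y1 y2. y1 < \<alpha> \<Longrightarrow> y2 < \<alpha> \<Longrightarrow> w1 * y1 + w2 * y2 \<le> b"
  shows "0 \<le> w1" "0 \<le> w2" "(w1 + w2) * \<alpha> \<le> b"
proof -
  have nonneg: "0 \<le> c1"
    if "\<And>y1 y2. y1 < \<alpha> \<Longrightarrow> y2 < \<alpha> \<Longrightarrow> c1 * y1 + c2 * y2 \<le> b" for c1 c2 :: real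
  proof (rule ccontr)
    assume "\<not> 0 \<le> c1"
    then have "c1 < 0" by simp
    define y1 where "y1 = min (\<alpha> - 1) ((b - c2 * (\<alpha> - 1) + 1) / c1)"
    have "c1 * y1 \<ge> b - c2 * (\<alpha> - 1) + 1"
      unfolding y1_def using \<open>c1 < 0\<close> by (auto simp: min_def field_simps)
    moreover have "c1 * y1 + c2 * (\<alpha> - 1) \<le> b"
      using that[of y1 "\<alpha> - 1"] unfolding y1_def by simp
    ultimately show False by linarith
  qed
  show w1_nonneg: "0 \<le> w1" using nonneg[of w1 w2] quadrant by blast
  show w2_nonneg: "0 \<le> w2" using nonneg[of w2 w1] quadrant by (simp add: add.commute)
  show "(w1 + w2) * \<alpha> \<le> b"
  proof (rule field_le_epsilon)
    fix e :: real assume "0 < e"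
    define y where "y = \<alpha> - e / (w1 + w2 + 1)"
    have "(w1 + w2) * y \<le> b" using quadrant[of y y] \<open>0 < e\<close> w1_nonneg w2_nonneg
      unfolding y_def by (simp add: distrib_right)
    moreover have "(w1 + w2) * (e / (w1 + w2 + 1)) \<le> e"
      using \<open>0 < e\<close> w1_nonneg w2_nonneg by (simp add: field_simps)
    ultimately show "(w1 + w2) * \<alpha> \<le> b + e" unfolding y_def by (simp add: right_diff_distrib)
  qed
qed

lemma convex_joint_epigraph:
  fixes u v :: "'a::real_vector \<Rightarrow> real"
  assumes "convex C" "convex_on C u" "convex_on C v"
  shows "convex {y. \<exists>x\<in>C. u x \<le> fst y \<and> v x \<le> snd y}"
  unfolding convex_def
proof (clarify)
  fix y z :: "real \<times> real" and p q :: real and x x'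
  assume pq: "0 \<le> p" "0 \<le> q" "p + q = 1"
    and x: "x \<in> C" "u x \<le> fst y" "v x \<le> snd y"
    and x': "x' \<in> C" "u x' \<le> fst z" "v x' \<le> snd z"
  have combine: "g (p *\<^sub>R x + q *\<^sub>R x') \<le> p * c + q * d"
    if "convex_on C g" "g x \<le> c" "g x' \<le> d" for g c d
  proof -
    have "g (p *\<^sub>R x + q *\<^sub>R x') \<le> p * g x + q * g x'"
      using that(1) pq x(1) x'(1) by (simp add: convex_on_def)
    also have "\<dots> \<le> p * c + q * d" using that(2,3) pq by (intro add_mono mult_left_mono) auto
    finally show ?thesis .
  qed
  have "p *\<^sub>R x + q *\<^sub>R x' \<in> C" using assms(1) pq x(1) x'(1) by (simp add: convex_def)
  then show "\<exists>x''\<in>C. u x'' \<le> fst (p *\<^sub>R y + q *\<^sub>R z) \<and> v x'' \<le> snd (p *\<^sub>R y + q *\<^sub>R z)"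
    using combine[OF assms(2) x(2) x'(2)] combine[OF assms(3) x(3) x'(3)] by auto
qed

lemma convex_on_max_ge_imp_combination_ge:
  fixes u v :: "'a::real_vector \<Rightarrow> real"
  assumes C: "convex C" and u: "convex_on C u" and v: "convex_on C v"
    and max_ge: "\<And>x. x \<in> C \<Longrightarrow> \<alpha> \<le> max (u x) (v x)"
  obtains t where "0 \<le> t" "t \<le> 1" "\<And>x. x \<in> C \<Longrightarrow> \<alpha> \<le> (1 - t) * u x + t * v x"
proof (cases "C = {}")
  case True
  then show ?thesis using that[of 0] by auto
next
  case False
  define S where "S = {y::real \<times> real. fst y < \<alpha> \<and> snd y < \<alpha>}"
  define T where "T = {y. \<exists>x\<in>C. u x \<le> fst y \<and> v x \<le> snd y}"
  have "convex S" unfolding S_def convex_def by (auto intro: convex_bound_lt)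
  moreover have "convex T" unfolding T_def by (rule convex_joint_epigraph[OF C u v])
  moreover have "(\<alpha> - 1, \<alpha> - 1) \<in> S" unfolding S_def by simp
  then have "S \<noteq> {}" by blast
  moreover have "T \<noteq> {}" using False unfolding T_def by fastforce
  moreover have "S \<inter> T = {}" using max_ge unfolding S_def T_def by fastforce
  ultimately obtain w b where "w \<noteq> 0" and S_le: "\<forall>y\<in>S. inner w y \<le> b" and T_ge: "\<forall>y\<in>T. b \<le> inner w y"
    using separating_hyperplane_sets by metis
  obtain w1 w2 where w: "w = (w1, w2)" by fastforce
  have "w1 * y1 + w2 * y2 \<le> b" if "y1 < \<alpha>" "y2 < \<alpha>" for y1 y2
    using S_le that unfolding S_def w by (auto simp: inner_prod_def)
  then have quadrant: "0 \<le> w1" "0 \<le> w2" "(w1 + w2) * \<alpha> \<le> b"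
    using lower_quadrant_halfplane by metis+
  define s where "s = w1 + w2"
  have "0 < s" using \<open>w \<noteq> 0\<close> quadrant(1,2) unfolding s_def w by (auto simp: zero_prod_def)
  show ?thesis
  proof (rule that[of "w2 / s"])
    show "0 \<le> w2 / s" "w2 / s \<le> 1" using quadrant(1,2) \<open>0 < s\<close> unfolding s_def by auto
    fix x assume "x \<in> C"
    then have "b \<le> w1 * u x + w2 * v x" using T_ge unfolding T_def w by (auto simp: inner_prod_def)
    moreover have "s * ((1 - w2 / s) * u x + w2 / s * v x) = w1 * u x + w2 * v x"
      using \<open>0 < s\<close> by (simp add: field_simps) (simp add: s_def algebra_simps)
    ultimately have "s * \<alpha> \<le> s * ((1 - w2 / s) * u x + w2 / s * v x)"
      using quadrant(3) unfolding s_def[symmetric] by linarith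
    then show "\<alpha> \<le> (1 - w2 / s) * u x + w2 / s * v x" using \<open>0 < s\<close> by simp
  qed
qed

lemma convex_on_weighted_sum:
  fixes a :: "nat \<Rightarrow> 'a::real_vector \<Rightarrow> real" and n :: nat
  assumes "convex C" "\<And>k. convex_on C (a k)" "\<And>k. k < n \<Longrightarrow> 0 \<le> l k"
  shows "convex_on C (\<lambda>x. \<Sum>k<n. l k * a k x)"
  using assms
proof (induction n)
  case 0
  then show ?case by (simp add: convex_on_const)
next
  case (Suc n)
  then show ?case by (auto intro!: convex_on_add convex_on_cmul)
qed

lemma dependent_nat_choice_prefix:
  fixes P :: "nat \<Rightarrow> (nat \<Rightarrow> 'a) \<Rightarrow> bool"
  assumes "\<exists>l. P 0 l"
    and step: "\<And>n l. P n l \<Longrightarrow> \<exists>l'. P (Suc n) l' \<and> (\<forall>k<n. l' k = l k)"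
    and prefix: "\<And>n l l'. P n l \<Longrightarrow> (\<forall>k<n. l' k = l k) \<Longrightarrow> P n l'"
  shows "\<exists>l. \<forall>n. P n l"
proof -
  obtain g where g: "\<And>n. P n (g n) \<and> (\<forall>k<n. g (Suc n) k = g n k)"
    using dependent_nat_choice[of P "\<lambda>n l l'. \<forall>k<n. l' k = l k"] assms(1) step by metis
  define L where "L k = g (Suc k) k" for k
  have "g n k = L k" if "k < n" for n k
    using that
  proof (induction n)
    case (Suc n)
    then show ?case using g[of n] by (cases "k = n") (auto simp: L_def)
  qed simp
  then have "P n L" for n using prefix[OF conjunct1[OF g[of n]]] by simp
  then show ?thesis by blast
qed

lemma split_mass_convex_max:
  fixes A a b :: "'a::real_vector \<Rightarrow> real"
  assumes C: "convex C" and convex: "convex_on C A" "convex_on C a" "convex_on C b" and "0 \<le> r"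
    and ge: "\<And>x. x \<in> C \<Longrightarrow> \<alpha> \<le> A x + r * max (a x) (b x)"
  obtains w where "0 \<le> w" "w \<le> r" "\<And>x. x \<in> C \<Longrightarrow> \<alpha> \<le> A x + w * a x + (r - w) * b x"
proof -
  have "convex_on C (\<lambda>x. A x + r * a x)" "convex_on C (\<lambda>x. A x + r * b x)"
    using convex \<open>0 \<le> r\<close> by (simp_all add: convex_on_add convex_on_cmul)
  moreover have "\<alpha> \<le> max (A x + r * a x) (A x + r * b x)" if "x \<in> C" for x
    using ge[OF that] \<open>0 \<le> r\<close> by (simp add: max_mult_distrib_left max_add_distrib_right)
  ultimately obtain t where t: "0 \<le> t" "t \<le> 1"
    and comb: "\<And>x. x \<in> C \<Longrightarrow> \<alpha> \<le> (1 - t) * (A x + r * a x) + t * (A x + r * b x)"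
    using convex_on_max_ge_imp_combination_ge[OF C] by blast
  show thesis
  proof (rule that[of "(1 - t) * r"])
    show "0 \<le> (1 - t) * r" "(1 - t) * r \<le> r" using t \<open>0 \<le> r\<close> by (simp_all add: mult_left_le_one_le)
    show "\<alpha> \<le> A x + (1 - t) * r * a x + (r - (1 - t) * r) * b x" if "x \<in> C" for x
      using comb[OF that] by (simp add: algebra_simps)
  qed
qed

lemma exists_tail_weights:
  fixes a s :: "nat \<Rightarrow> 'a::real_vector \<Rightarrow> real"
  assumes C: "convex C" and a: "\<And>k. convex_on C (a k)" and s: "\<And>N. convex_on C (s N)"
    and s_max: "\<And>N x. x \<in> C \<Longrightarrow> s N x = max (a N x) (s (Suc N) x)"
    and s_0: "\<And>x. x \<in> C \<Longrightarrow> \<alpha> \<le> s 0 x"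
  obtains l where "\<And>k. 0 \<le> l k" "\<And>N. (\<Sum>k<N. l k) \<le> 1"
    "\<And>N x. x \<in> C \<Longrightarrow> \<alpha> \<le> (\<Sum>k<N. l k * a k x) + (1 - (\<Sum>k<N. l k)) * s N x"
proof -
  define P where "P n l \<longleftrightarrow> (\<forall>k<n. 0 \<le> l k) \<and> (\<Sum>k<n. l k) \<le> 1 \<and>
    (\<forall>x\<in>C. \<alpha> \<le> (\<Sum>k<n. l k * a k x) + (1 - (\<Sum>k<n. l k)) * s n x)" for n l
  have "\<exists>l. \<forall>n. P n l"
  proof (rule dependent_nat_choice_prefix)
    show "\<exists>l. P 0 l" using s_0 by (auto simp: P_def)
  next
    fix n and l l' :: "nat \<Rightarrow> real"
    assume "P n l" "\<forall>k<n. l' k = l k"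
    then have "(\<Sum>k<n. l' k) = (\<Sum>k<n. l k)" "(\<Sum>k<n. l' k * a k x) = (\<Sum>k<n. l k * a k x)" for x
      by (auto intro: sum.cong)
    with \<open>P n l\<close> \<open>\<forall>k<n. l' k = l k\<close> show "P n l'" unfolding P_def by simp
  next
    fix n l assume "P n l"
    define r where "r = 1 - (\<Sum>k<n. l k)"
    define A where "A x = (\<Sum>k<n. l k * a k x)" for x
    have "0 \<le> r" using \<open>P n l\<close> by (simp add: P_def r_def)
    have "convex_on C A"
      unfolding A_def using \<open>P n l\<close> by (intro convex_on_weighted_sum C a) (simp add: P_def)
    moreover have "\<alpha> \<le> A x + r * max (a n x) (s (Suc n) x)" if "x \<in> C" for x
      using \<open>P n l\<close> that by (simp add: P_def A_def r_def flip: s_max[of x n, OF that])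
    ultimately obtain w where w: "0 \<le> w" "w \<le> r"
      and w_ge: "\<And>x. x \<in> C \<Longrightarrow> \<alpha> \<le> A x + w * a n x + (r - w) * s (Suc n) x"
      using split_mass_convex_max[OF C _ a s \<open>0 \<le> r\<close>] by blast
    define l' where "l' = l(n := w)"
    have sum_l': "(\<Sum>k<Suc n. l' k) = 1 - r + w" by (simp add: l'_def r_def)
    have "P (Suc n) l'"
      unfolding P_def
    proof (intro conjI ballI allI impI)
      show "0 \<le> l' k" if "k < Suc n" for k
        using \<open>P n l\<close> that w by (auto simp: P_def l'_def less_Suc_eq)
      show "(\<Sum>k<Suc n. l' k) \<le> 1" using sum_l' w by simp
      show "\<alpha> \<le> (\<Sum>k<Suc n. l' k * a k x) + (1 - (\<Sum>k<Suc n. l' k)) * s (Suc n) x" if "x \<in> C" for x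
        using w_ge[OF that] unfolding sum_l' by (simp add: l'_def A_def algebra_simps)
    qed
    then show "\<exists>l'. P (Suc n) l' \<and> (\<forall>k<n. l' k = l k)" by (auto simp: l'_def)
  qed
  then obtain l where "\<And>n. P n l" by blast
  then show thesis by (intro that[of l]) (auto simp: P_def)
qed

lemma emul_ereal_eq [simp]: "emul l (ereal a) = ereal (l * a)"
  by (simp add: emul_def)

lemma emul_infinity [simp]: "0 \<le> l \<Longrightarrow> emul l \<infinity> = \<infinity>"
  by (simp add: emul_def)

lemma emul_le_ereal_mult:
  assumes "0 \<le> l" "t \<le> ereal M"
  shows "emul l t \<le> ereal (l * M)"
  using assms by (cases t) (auto simp: emul_def mult_left_mono)

lemma ge_limsup_partial_combination:
  fixes b l :: "nat \<Rightarrow> real" and s :: "nat \<Rightarrow> real"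
  assumes b_le: "\<And>k. b k \<le> M" and l: "\<And>k. 0 \<le> l k" "summable l"
    and li: "0 \<le> li" "suminf l + li = 1"
    and s_tail: "\<And>N. ereal (s N) = (SUP k\<in>{N..}. ereal (b k))"
    and ge: "\<And>N. \<alpha> \<le> (\<Sum>k<N. l k * b k) + (1 - (\<Sum>k<N. l k)) * s N"
  shows "ereal \<alpha> \<le> limsup (\<lambda>n. ereal (\<Sum>k<n. l k * b k)) + emul li (limsup (\<lambda>k. ereal (b k)))"
proof -
  define L where "L = limsup (\<lambda>k. ereal (b k))"
  define t where "t N = suminf l - (\<Sum>k<N. l k)" for N
  have "0 \<le> t N" for N unfolding t_def using sum_le_suminf[OF l(2)] l(1) by auto
  have "t \<longlonglongrightarrow> 0"
    unfolding t_def using tendsto_diff[OF tendsto_const[of "suminf l"] summable_LIMSEQ[OF l(2)]] by simp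
  have "ereal (s N) \<le> ereal M" for N unfolding s_tail by (rule SUP_least) (simp add: b_le)
  then have "s N \<le> M" for N by simp
  have "L \<le> ereal M" unfolding L_def by (rule Limsup_bounded) (simp add: b_le)
  have "ereal \<alpha> \<le> ereal (\<Sum>k<N. l k * b k) + (ereal li * ereal (s N) + ereal (t N * M))" for N
  proof -
    have "1 - (\<Sum>k<N. l k) = li + t N" using li(2) by (simp add: t_def)
    then have "(1 - (\<Sum>k<N. l k)) * s N = li * s N + t N * s N" by (simp add: distrib_right)
    moreover have "t N * s N \<le> t N * M" using \<open>s N \<le> M\<close> \<open>0 \<le> t N\<close> by (rule mult_left_mono)
    ultimately show ?thesis using ge[of N] by simp
  qed
  then have "limsup (\<lambda>_. ereal \<alpha>)
      \<le> limsup (\<lambda>N. ereal (\<Sum>k<N. l k * b k) + (ereal li * ereal (s N) + ereal (t N * M)))"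
    by (intro Limsup_mono always_eventually allI)
  then have "ereal \<alpha> \<le> limsup (\<lambda>N. ereal (\<Sum>k<N. l k * b k) + (ereal li * ereal (s N) + ereal (t N * M)))"
    by (simp add: Limsup_const)
  also have "\<dots> \<le> limsup (\<lambda>N. ereal (\<Sum>k<N. l k * b k)) + limsup (\<lambda>N. ereal li * ereal (s N) + ereal (t N * M))"
    by (rule ereal_limsup_add_mono)
  also have "limsup (\<lambda>N. ereal li * ereal (s N) + ereal (t N * M))
      \<le> limsup (\<lambda>N. ereal li * ereal (s N)) + limsup (\<lambda>N. ereal (t N * M))"
    by (rule ereal_limsup_add_mono)
  also have "limsup (\<lambda>N. ereal (t N * M)) = 0"
    using \<open>t \<longlonglongrightarrow> 0\<close> by (intro lim_imp_Limsup) (auto intro!: tendsto_eq_intros simp: zero_ereal_def)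
  also have "limsup (\<lambda>N. ereal li * ereal (s N)) = ereal li * L"
  proof (intro lim_imp_Limsup tendsto_cmult_ereal)
    have "decseq (\<lambda>N. ereal (s N))" unfolding s_tail decseq_def by (auto intro!: SUP_subset_mono)
    then show "(\<lambda>N. ereal (s N)) \<longlonglongrightarrow> L"
      unfolding L_def limsup_INF_SUP s_tail[symmetric] by (rule LIMSEQ_INF)
  qed auto
  also have "ereal li * L = emul li L" using \<open>L \<le> ereal M\<close> by (auto simp: emul_def)
  finally show ?thesis by (simp add: L_def add_left_mono)
qed

lemma limsup_eq_infinity_if_SUP_eq_infinity:
  fixes u :: "nat \<Rightarrow> ereal"
  assumes finite: "\<And>k. u k < \<infinity>" and sup: "(SUP k. u k) = \<infinity>"
  shows "limsup u = \<infinity>"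
proof (rule ccontr)
  assume "limsup u \<noteq> \<infinity>"
  then have "(INF n. SUP k\<in>{n..}. u k) < \<infinity>" unfolding limsup_INF_SUP by (simp add: less_top)
  then obtain N where "(SUP k\<in>{N..}. u k) < \<infinity>" unfolding INF_less_iff by blast
  moreover have "(SUP k\<in>{..N}. u k) < \<infinity>"
    using finite by (subst finite_Sup_less_iff) auto
  moreover have "UNIV = {..N} \<union> {N..}" by auto
  then have "(SUP k. u k) = sup (SUP k\<in>{..N}. u k) (SUP k\<in>{N..}. u k)" by (metis SUP_union)
  ultimately show False using sup by (simp add: sup_max max_def split: if_splits)
qed

lemma upper_series_eq_infinity_if_SUP_eq_infinity:
  fixes f :: "nat \<Rightarrow> 'a \<Rightarrow> ereal"
  assumes not_minf: "\<And>k. f k x \<noteq> -\<infinity>" and sup: "(SUP k. f k x) = \<infinity>"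
    and "\<And>k. 0 \<le> l k" "0 \<le> li"
  shows "upper_series l f x + emul li (limsup (\<lambda>k. f k x)) = \<infinity>"
proof (cases "\<exists>k. f k x = \<infinity>")
  case True
  then obtain k where "f k x = \<infinity>" by blast
  then have "emul (l k) (f k x) = \<infinity>" using assms(3) by simp
  then have "\<forall>n\<ge>Suc k. (\<Sum>j<n. emul (l j) (f j x)) = \<infinity>"
    by (auto simp: sum_Pinfty intro!: bexI[of _ k])
  then have "upper_series l f x = \<infinity>"
    unfolding upper_series_def
    by (intro lim_imp_Limsup) (auto intro: tendsto_eventually eventually_sequentiallyI)
  then show ?thesis by simp
next
  case False
  then have "limsup (\<lambda>k. f k x) = \<infinity>"
    using sup by (intro limsup_eq_infinity_if_SUP_eq_infinity) (auto simp: less_top)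
  then show ?thesis using \<open>0 \<le> li\<close> by simp
qed

lemma upper_series_emul_limsup_le_SUP:
  fixes f :: "nat \<Rightarrow> 'a \<Rightarrow> ereal"
  assumes not_minf: "\<And>k. f k x \<noteq> -\<infinity>"
    and l: "\<And>k. 0 \<le> l k" "summable l" and li: "0 \<le> li" "suminf l + li = 1"
  shows "upper_series l f x + emul li (limsup (\<lambda>k. f k x)) \<le> (SUP k. f k x)"
proof (cases "(SUP k. f k x) = \<infinity>")
  case False
  moreover have "(SUP k. f k x) \<noteq> -\<infinity>"
    using not_minf[of 0] SUP_upper[of 0 UNIV "\<lambda>k. f k x"] by auto
  ultimately obtain M where M: "(SUP k. f k x) = ereal M" by (cases "SUP k. f k x") auto
  then have f_le: "f k x \<le> ereal M" for k by (metis SUP_upper UNIV_I)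
  define b where "b k = real_of_ereal (f k x)" for k
  have f_eq: "f k x = ereal (b k)" for k
    unfolding b_def using f_le[of k] not_minf[of k] by (cases "f k x") auto
  have "upper_series l f x = limsup (\<lambda>n. ereal (\<Sum>k<n. l k * b k))"
    unfolding upper_series_def f_eq by simp
  also have "\<dots> \<le> limsup (\<lambda>n. ereal ((\<Sum>k<n. l k) * M))"
  proof (intro Limsup_mono always_eventually allI)
    fix n
    have "(\<Sum>k<n. l k * b k) \<le> (\<Sum>k<n. l k * M)"
      using f_le f_eq l(1) by (intro sum_mono mult_left_mono) auto
    then show "ereal (\<Sum>k<n. l k * b k) \<le> ereal ((\<Sum>k<n. l k) * M)"
      by (simp add: sum_distrib_right)
  qed
  also have "\<dots> = ereal (suminf l * M)"
    by (intro lim_imp_Limsup tendsto_ereal tendsto_intros summable_LIMSEQ l) simp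
  finally have "upper_series l f x \<le> ereal (suminf l * M)" .
  moreover have "limsup (\<lambda>k. f k x) \<le> ereal M" by (rule Limsup_bounded) (simp add: f_le)
  then have "emul li (limsup (\<lambda>k. f k x)) \<le> ereal (li * M)" by (rule emul_le_ereal_mult[OF li(1)])
  ultimately have "upper_series l f x + emul li (limsup (\<lambda>k. f k x)) \<le> ereal (suminf l * M + li * M)"
    by (metis add_mono plus_ereal.simps(1))
  also have "\<dots> = (SUP k. f k x)" using M li(2) by (simp add: distrib_right[symmetric])
  finally show ?thesis .
qed simp

lemma convex_efun_SUP:
  assumes "\<And>k. k \<in> K \<Longrightarrow> convex_efun (f k)"
  shows "convex_efun (\<lambda>x. SUP k\<in>K. f k x)"
  unfolding convex_efun_def
proof (intro allI impI SUP_least)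
  fix x y k and t :: real assume t: "0 < t \<and> t < 1" and "k \<in> K"
  then have "f k ((1 - t) *\<^sub>R x + t *\<^sub>R y) \<le> ereal (1 - t) * f k x + ereal t * f k y"
    using assms unfolding convex_efun_def by blast
  also have "\<dots> \<le> ereal (1 - t) * (SUP k\<in>K. f k x) + ereal t * (SUP k\<in>K. f k y)"
    using t \<open>k \<in> K\<close> by (intro add_mono ereal_mult_left_mono SUP_upper) auto
  finally show "f k ((1 - t) *\<^sub>R x + t *\<^sub>R y) \<le> ereal (1 - t) * (SUP k\<in>K. f k x) + ereal t * (SUP k\<in>K. f k y)" .
qed

lemma convex_efun_imp_convex_domain:
  assumes "convex_efun g"
  shows "convex {x. g x < \<infinity>}"
  unfolding convex_alt
proof (intro ballI allI impI)
  fix x y and t :: real assume "x \<in> {x. g x < \<infinity>}" "y \<in> {x. g x < \<infinity>}" "0 \<le> t \<and> t \<le> 1"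
  moreover have "g ((1 - t) *\<^sub>R x + t *\<^sub>R y) \<le> ereal (1 - t) * g x + ereal t * g y" if "0 < t" "t < 1"
    using assms that unfolding convex_efun_def by blast
  ultimately show "(1 - t) *\<^sub>R x + t *\<^sub>R y \<in> {x. g x < \<infinity>}"
    by (cases "g x"; cases "g y"; cases "t = 0"; cases "t = 1") (auto simp: less_le_trans)
qed

lemma convex_efun_imp_convex_on:
  assumes "convex_efun g" "convex C" "\<And>x. x \<in> C \<Longrightarrow> \<bar>g x\<bar> \<noteq> \<infinity>"
  shows "convex_on C (\<lambda>x. real_of_ereal (g x))"
proof (rule convex_onI[OF _ \<open>convex C\<close>])
  fix t :: real and x y assume t: "0 < t" "t < 1" and "x \<in> C" "y \<in> C"
  define z where "z = (1 - t) *\<^sub>R x + t *\<^sub>R y"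
  have "z \<in> C" using \<open>convex C\<close> \<open>x \<in> C\<close> \<open>y \<in> C\<close> t by (simp add: z_def convex_def)
  have "g z \<le> ereal (1 - t) * g x + ereal t * g y"
    using assms(1) t unfolding convex_efun_def z_def by blast
  moreover have "\<bar>g x\<bar> \<noteq> \<infinity>" "\<bar>g y\<bar> \<noteq> \<infinity>" "\<bar>g z\<bar> \<noteq> \<infinity>"
    using assms(3) \<open>x \<in> C\<close> \<open>y \<in> C\<close> \<open>z \<in> C\<close> by auto
  ultimately show "real_of_ereal (g ((1 - t) *\<^sub>R x + t *\<^sub>R y))
      \<le> (1 - t) * real_of_ereal (g x) + t * real_of_ereal (g y)"
    unfolding z_def[symmetric] by (cases "g x"; cases "g y"; cases "g z") auto
qed

lemma tail_SUP_finite: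
  fixes f :: "nat \<Rightarrow> ereal"
  assumes not_minf: "\<And>k. f k \<noteq> -\<infinity>" and finite: "(SUP k. f k) < \<infinity>"
  shows "\<bar>f k\<bar> \<noteq> \<infinity>" "\<bar>SUP k\<in>{N..}. f k\<bar> \<noteq> \<infinity>"
proof -
  have "f k \<le> (SUP k. f k)" "f N \<le> (SUP k\<in>{N..}. f k)" "(SUP k\<in>{N..}. f k) \<le> (SUP k. f k)"
    by (auto intro: SUP_upper SUP_subset_mono)
  then show "\<bar>f k\<bar> \<noteq> \<infinity>" "\<bar>SUP k\<in>{N..}. f k\<bar> \<noteq> \<infinity>"
    using not_minf[of k] not_minf[of N] finite by auto
qed

lemma ge_upper_series_emul_limsup:
  fixes f :: "nat \<Rightarrow> 'a \<Rightarrow> ereal"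
  assumes not_minf: "\<And>k. f k x \<noteq> -\<infinity>"
    and l: "\<And>k. 0 \<le> l k" "summable l" and li: "0 \<le> li" "suminf l + li = 1"
    and ge: "\<And>N. (SUP k. f k x) < \<infinity> \<Longrightarrow> \<alpha> \<le> (\<Sum>k<N. l k * real_of_ereal (f k x))
      + (1 - (\<Sum>k<N. l k)) * real_of_ereal (SUP k\<in>{N..}. f k x)"
  shows "ereal \<alpha> \<le> upper_series l f x + emul li (limsup (\<lambda>k. f k x))"
proof (cases "(SUP k. f k x) < \<infinity>")
  case True
  note finite = tail_SUP_finite[of "\<lambda>k. f k x", OF not_minf True]
  define b where "b k = real_of_ereal (f k x)" for k
  have f_eq: "f k x = ereal (b k)" for k using finite(1) by (simp add: b_def ereal_real)
  have b_le: "b k \<le> real_of_ereal (SUP k. f k x)" for k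
  proof -
    have "f k x \<le> (SUP k. f k x)" by (rule SUP_upper) simp
    then show ?thesis using finite(2)[of 0] by (cases "SUP k. f k x") (simp_all add: f_eq)
  qed
  have tail: "ereal (real_of_ereal (SUP k\<in>{N..}. f k x)) = (SUP k\<in>{N..}. ereal (b k))" for N
    using finite(2) by (simp add: ereal_real f_eq)
  have "\<alpha> \<le> (\<Sum>k<N. l k * b k) + (1 - (\<Sum>k<N. l k)) * real_of_ereal (SUP k\<in>{N..}. f k x)" for N
    using ge[OF True] by (simp add: b_def)
  from ge_limsup_partial_combination[OF b_le l li tail this]
  have "ereal \<alpha> \<le> limsup (\<lambda>n. ereal (\<Sum>k<n. l k * b k)) + emul li (limsup (\<lambda>k. ereal (b k)))" .
  then show ?thesis unfolding upper_series_def f_eq by simp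
next
  case False
  then have "(SUP k. f k x) = \<infinity>" by (simp add: top.not_eq_extremum)
  then have "upper_series l f x + emul li (limsup (\<lambda>k. f k x)) = \<infinity>"
    by (intro upper_series_eq_infinity_if_SUP_eq_infinity not_minf l(1) li(1))
  then show ?thesis by (metis ereal_less_eq(1))
qed

lemma exists_weights_ge_upper_series:
  fixes f :: "nat \<Rightarrow> 'a::real_vector \<Rightarrow> ereal"
  assumes not_minf: "\<And>k x. f k x \<noteq> -\<infinity>" and convex: "\<And>k. convex_efun (f k)"
    and ge: "\<And>x. ereal \<alpha> \<le> (SUP k. f k x)"
  obtains l li where "\<And>k. 0 \<le> l k" "summable l" "0 \<le> li" "suminf l + li = 1"
    "\<And>x. ereal \<alpha> \<le> upper_series l f x + emul li (limsup (\<lambda>k. f k x))"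
proof -
  define D where "D = {x. (SUP k. f k x) < \<infinity>}"
  define a where "a k x = real_of_ereal (f k x)" for k x
  define s where "s N x = real_of_ereal (SUP k\<in>{N..}. f k x)" for N x
  have f_finite: "\<bar>f k x\<bar> \<noteq> \<infinity>" and tail_finite: "\<bar>SUP k\<in>{N..}. f k x\<bar> \<noteq> \<infinity>"
    if "x \<in> D" for k N x
    using tail_SUP_finite[of "\<lambda>k. f k x", OF not_minf] that by (auto simp: D_def)
  have "convex D"
    unfolding D_def by (rule convex_efun_imp_convex_domain[OF convex_efun_SUP[OF convex]])
  have a_convex: "convex_on D (a k)" for k
    unfolding a_def by (intro convex_efun_imp_convex_on convex \<open>convex D\<close> f_finite)
  have s_convex: "convex_on D (s N)" for N
    unfolding s_def by (intro convex_efun_imp_convex_on convex_efun_SUP convex \<open>convex D\<close> tail_finite)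
  have s_max: "s N x = max (a N x) (s (Suc N) x)" if "x \<in> D" for N x
  proof -
    have "{N..} = insert N {Suc N..}" by auto
    then have "(SUP k\<in>{N..}. f k x) = max (f N x) (SUP k\<in>{Suc N..}. f k x)" by (simp add: sup_max)
    then show ?thesis
      using f_finite[OF that, of N] tail_finite[OF that, of "Suc N"] unfolding a_def s_def
      by (cases "f N x"; cases "SUP k\<in>{Suc N..}. f k x") (auto simp: max_def)
  qed
  have s_0: "\<alpha> \<le> s 0 x" if "x \<in> D" for x
    using ge[of x] tail_finite[OF that, of 0] by (cases "SUP k. f k x") (simp_all add: s_def)
  obtain l where l: "\<And>k. 0 \<le> l k" "\<And>N. (\<Sum>k<N. l k) \<le> 1"
    and l_ge: "\<And>N x. x \<in> D \<Longrightarrow> \<alpha> \<le> (\<Sum>k<N. l k * a k x) + (1 - (\<Sum>k<N. l k)) * s N x"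
    using exists_tail_weights[OF \<open>convex D\<close> a_convex s_convex s_max s_0] by blast
  have "summable l" by (rule summableI_nonneg_bounded[OF l])
  have li: "0 \<le> 1 - suminf l" using suminf_le_const[OF \<open>summable l\<close> l(2)] by simp
  have "ereal \<alpha> \<le> upper_series l f x + emul (1 - suminf l) (limsup (\<lambda>k. f k x))" for x
    using l_ge[of x] not_minf l(1) \<open>summable l\<close> li
    by (intro ge_upper_series_emul_limsup) (auto simp: D_def a_def s_def)
  then show thesis using that[OF l(1) \<open>summable l\<close> li] by simp
qed

theorem proposition3p2:
  fixes f :: "nat \<Rightarrow> 'a::banach \<Rightarrow> ereal"
  assumes proper_k: "\<And>k. proper_fun (f k)"
    and convex_k: "\<And>k. convex_efun (f k)"
    and proper_sup: "proper_fun (\<lambda>x. SUP k. f k x)"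
  defines "f_inf \<equiv> (\<lambda>x. limsup (\<lambda>k. f k x))"
  defines "Lam \<equiv> {(l, li). (\<forall>k. 0 \<le> l k) \<and> summable l \<and> 0 \<le> li \<and> suminf l + li = 1}"
  defines "val \<equiv> (\<lambda>(l, li). INF x. upper_series l f x + emul li (f_inf x))"
  shows "(\<exists>p\<in>Lam. val p = (INF x. SUP k. f k x))
       \<and> (\<forall>p\<in>Lam. val p \<le> (INF x. SUP k. f k x))"
proof -
  let ?inf = "INF x. SUP k. f k x"
  have not_minf: "\<And>k x. f k x \<noteq> -\<infinity>" using proper_k by (simp add: proper_fun_def)
  have weak: "val p \<le> ?inf" if p: "p \<in> Lam" for p
  proof -
    obtain l li where "p = (l, li)" "\<And>k. 0 \<le> l k" "summable l" "0 \<le> li" "suminf l + li = 1"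
      using p unfolding Lam_def by blast
    then show ?thesis
      unfolding val_def f_inf_def by (simp add: INF_mono' upper_series_emul_limsup_le_SUP not_minf)
  qed
  have "\<exists>p\<in>Lam. ?inf \<le> val p"
  proof (cases "?inf = -\<infinity>")
    case True
    then show ?thesis unfolding Lam_def by (auto intro!: bexI[of _ "(\<lambda>_. 0, 1)"])
  next
    case False
    obtain x0 where "(SUP k. f k x0) \<noteq> \<infinity>" using proper_sup by (auto simp: proper_fun_def)
    moreover have "?inf \<le> (SUP k. f k x0)" by (rule INF_lower) simp
    ultimately obtain \<alpha> where \<alpha>: "?inf = ereal \<alpha>" using False by (cases ?inf) auto
    have \<alpha>_le: "ereal \<alpha> \<le> (SUP k. f k x)" for x unfolding \<alpha>[symmetric] by (rule INF_lower) simp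
    obtain l li where l: "\<And>k. 0 \<le> l k" "summable l" "0 \<le> li" "suminf l + li = 1"
      and ge: "\<And>x. ereal \<alpha> \<le> upper_series l f x + emul li (limsup (\<lambda>k. f k x))"
      using exists_weights_ge_upper_series[OF not_minf convex_k \<alpha>_le] by blast
    have "(l, li) \<in> Lam" using l by (simp add: Lam_def)
    moreover have "?inf \<le> val (l, li)" unfolding \<alpha> val_def f_inf_def by (simp add: INF_greatest ge)
    ultimately show ?thesis by blast
  qed
  then show ?thesis using weak by (meson antisym)
qed

end
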